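(* Let $m>n$ be positive integers, $\lambda\in X$, $\Lambda=x(\lambda)$, and $\alpha=\epsilon_i-\delta_j$ with $i\in[n]$, $j\in[m]$. Then: (a) if $\lambda\in X_\alpha$ then $\Lambda\in\Pi_\alpha$; (b) if $\lambda\in X_{-\alpha}$ then $\Lambda\in\Pi_{-\alpha}$; (c) if $\lambda\in X_{\pm\alpha}$ then $x(t_{\pm\alpha}(\lambda))=\tau_{\pm\alpha}(\Lambda)$.
   Context: $X$ is the set of partitions $\lambda=(\lambda_1\ge\dots\ge\lambda_n\ge0)$ with $\lambda_1\le m$, drawn in an $n\times m$ rectangle with rows $\epsilon_1,\dots,\epsilon_n$ top to bottom and columns $\delta_1,\dots,\delta_m$; the diagram consists of boxes $\epsilon_i-\delta_j$ with $j\le\lambda_{n+1-i}$; $\lambda'_j=\#\{i:\lambda_i\ge j\}$. $X_\alpha$ (resp. $X_{-\alpha}$) is the set of $\lambda$ for which box $\alpha$ is an outer (resp. inner) corner; $t_\alpha$ adds, $t_{-\alpha}$ removes this box. Elements of $\mathbb Z^{n|m}$ are $(a_1,\dots,a_n|b_1,\dots,b_m)$; $x(\lambda)$ has $a_i=m(n-i)+n\lambda_{n+1-i}$, $b_j=n(j-1)+m\lambda'_j$. $\Pi_\alpha=\{a_i=b_j\}$, $\Pi_{-\alpha}=\{a_i-b_j=n-m\}$, $\tau_\alpha(\Lambda)$ adds $n$ to $a_i$ and $m$ to $b_j$, and $\tau_{-\alpha}=\tau_\alpha^{-1}$ subtracts them. *)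

theory Defs
  imports Main
begin

definition Xset :: "nat \<Rightarrow> nat \<Rightarrow> (nat \<Rightarrow> nat) set" where
  "Xset n m = {lam. (\<forall>k. (k < 1 \<or> k > n) \<longrightarrow> lam k = 0)
                  \<and> (\<forall>k\<in>{1..n}. lam k \<le> m)
                  \<and> (\<forall>k l. 1 \<le> k \<and> k \<le> l \<and> l \<le> n \<longrightarrow> lam l \<le> lam k)}"

text \<open>Young diagram: box (i,j) stands for epsilon_i - delta_j; it lies in the diagram iff
  j <= lam (n+1-i).\<close>
definition diagram :: "nat \<Rightarrow> nat \<Rightarrow> (nat \<Rightarrow> nat) \<Rightarrow> (nat \<times> nat) set" where
  "diagram n m lam = {(i, j). 1 \<le> i \<and> i \<le> n \<and> 1 \<le> j \<and> j \<le> m \<and> j \<le> lam (n + 1 - i)}"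

definition Xplus :: "nat \<Rightarrow> nat \<Rightarrow> nat \<Rightarrow> nat \<Rightarrow> (nat \<Rightarrow> nat) set" where
  "Xplus n m i j = {lam \<in> Xset n m. (i, j) \<notin> diagram n m lam \<and>
      (\<exists>mu \<in> Xset n m. diagram n m mu = diagram n m lam \<union> {(i, j)})}"

definition Xminus :: "nat \<Rightarrow> nat \<Rightarrow> nat \<Rightarrow> nat \<Rightarrow> (nat \<Rightarrow> nat) set" where
  "Xminus n m i j = {lam \<in> Xset n m. (i, j) \<in> diagram n m lam \<and>
      (\<exists>mu \<in> Xset n m. diagram n m mu = diagram n m lam - {(i, j)})}"

text \<open>t_alpha adds the box (i,j) (row i corresponds to the part lam (n+1-i)),
  t_{-alpha} removes it.\<close>
definition tplus :: "nat \<Rightarrow> nat \<Rightarrow> nat \<Rightarrow> (nat \<Rightarrow> nat) \<Rightarrow> (nat \<Rightarrow> nat)" where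
  "tplus n i j lam = lam(n + 1 - i := lam (n + 1 - i) + 1)"

definition tminus :: "nat \<Rightarrow> nat \<Rightarrow> nat \<Rightarrow> (nat \<Rightarrow> nat) \<Rightarrow> (nat \<Rightarrow> nat)" where
  "tminus n i j lam = lam(n + 1 - i := lam (n + 1 - i) - 1)"

definition conj_part :: "nat \<Rightarrow> (nat \<Rightarrow> nat) \<Rightarrow> nat \<Rightarrow> nat" where
  "conj_part n lam j = card {k \<in> {1..n}. lam k \<ge> j}"

text \<open>Elements of Z^{n|m} as pairs (a, b) of integer sequences, a indexed by 1..n and
  b indexed by 1..m (entries outside these ranges are 0 for x(lam)).\<close>
type_synonym zvec = "(nat \<Rightarrow> int) \<times> (nat \<Rightarrow> int)"

definition xmap :: "nat \<Rightarrow> nat \<Rightarrow> (nat \<Rightarrow> nat) \<Rightarrow> zvec" where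
  "xmap n m lam =
     ((\<lambda>i. if 1 \<le> i \<and> i \<le> n then int m * (int n - int i) + int n * int (lam (n + 1 - i)) else 0),
      (\<lambda>j. if 1 \<le> j \<and> j \<le> m then int n * (int j - 1) + int m * int (conj_part n lam j) else 0))"

definition Piplus :: "nat \<Rightarrow> nat \<Rightarrow> zvec set" where
  "Piplus i j = {L. fst L i = snd L j}"

definition Piminus :: "nat \<Rightarrow> nat \<Rightarrow> nat \<Rightarrow> nat \<Rightarrow> zvec set" where
  "Piminus n m i j = {L. fst L i - snd L j = int n - int m}"

definition tauplus :: "nat \<Rightarrow> nat \<Rightarrow> nat \<Rightarrow> nat \<Rightarrow> zvec \<Rightarrow> zvec" where
  "tauplus n m i j L = ((fst L)(i := fst L i + int n), (snd L)(j := snd L j + int m))"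

definition tauminus :: "nat \<Rightarrow> nat \<Rightarrow> nat \<Rightarrow> nat \<Rightarrow> zvec \<Rightarrow> zvec" where
  "tauminus n m i j L = ((fst L)(i := fst L i - int n), (snd L)(j := snd L j - int m))"

end

theory Submission
  imports Defs
begin

text \<open>Adding the box \<open>\<epsilon>\<^sub>i - \<delta>\<^sub>j\<close> to \<open>\<lambda>\<close> means that the part \<open>\<lambda>\<^sub>r\<close>, \<open>r = n + 1 - i\<close>, equals \<open>j - 1\<close>
  and grows to \<open>j\<close>; monotonicity then gives \<open>\<lambda>'\<^sub>j = r - 1 = n - i\<close>, so both \<open>a\<^sub>i\<close> and \<open>b\<^sub>j\<close>
  equal \<open>m(n - i) + n(j - 1)\<close>. The step changes only \<open>a\<^sub>i\<close> (by \<open>n\<close>) and \<open>\<lambda>'\<^sub>j\<close> (by one,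
  so \<open>b\<^sub>j\<close> by \<open>m\<close>). Removing a box from \<open>\<lambda>\<close> is adding it to \<open>t\<^sub>-\<^sub>\<alpha>(\<lambda>)\<close>, so (b) and the
  second half of (c) follow by applying \<open>\<tau>\<^sub>-\<^sub>\<alpha> = \<tau>\<^sub>\<alpha>\<inverse>\<close>.\<close>

lemma Xset_zero: "lam \<in> Xset n m \<Longrightarrow> k < 1 \<or> n < k \<Longrightarrow> lam k = 0"
  unfolding Xset_def by auto

lemma Xset_antimono: "lam \<in> Xset n m \<Longrightarrow> 1 \<le> k \<Longrightarrow> k \<le> l \<Longrightarrow> l \<le> n \<Longrightarrow> lam l \<le> lam k"
  unfolding Xset_def by blast

lemma Xset_le: "lam \<in> Xset n m \<Longrightarrow> 1 \<le> k \<Longrightarrow> k \<le> n \<Longrightarrow> lam k \<le> m"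
  unfolding Xset_def by auto

lemma diagram_row:
  assumes "lam \<in> Xset n m" "1 \<le> k" "k \<le> n"
  shows "{j. (n + 1 - k, j) \<in> diagram n m lam} = {1..lam k}"
proof -
  have "lam k \<le> m" using Xset_le[OF assms] .
  moreover have "n + 1 - (n + 1 - k) = k" using assms by simp
  ultimately show ?thesis using assms unfolding diagram_def by auto
qed

lemma diagram_add_box:
  assumes lam: "lam \<in> Xset n m" and mu: "mu \<in> Xset n m"
    and i: "1 \<le> i" "i \<le> n" and new: "(i, j) \<notin> diagram n m lam"
    and add: "diagram n m mu = diagram n m lam \<union> {(i, j)}"
  shows "mu = tplus n i j lam" and "j = lam (n + 1 - i) + 1"
proof -
  define r where "r = n + 1 - i"
  have r: "1 \<le> r" "r \<le> n" "n + 1 - r = i" using i by (auto simp: r_def)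
  have rows: "{1..mu k} = {1..lam k} \<union> (if k = r then {j} else {})" if "1 \<le> k" "k \<le> n" for k
  proof -
    have "(n + 1 - k = i) = (k = r)" using that i by (auto simp: r_def)
    then show ?thesis
      using diagram_row[OF lam that] diagram_row[OF mu that] add by auto
  qed
  have j_new: "j \<notin> {1..lam r}" using new diagram_row[OF lam r(1,2)] r(3) by auto
  have row_r: "{1..mu r} = insert j {1..lam r}" using rows[OF r(1,2)] by simp
  then have "card {1..mu r} = Suc (card {1..lam r})" using j_new by simp
  then have mu_r: "mu r = lam r + 1" by simp
  have "j \<in> {1..mu r}" using row_r by blast
  then have j: "j = lam r + 1" using j_new mu_r by auto
  show "j = lam (n + 1 - i) + 1" using j by (simp add: r_def)
  show "mu = tplus n i j lam"
  proof
    fix k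
    show "mu k = tplus n i j lam k"
    proof (cases "1 \<le> k \<and> k \<le> n")
      case True
      then have "k \<noteq> r \<Longrightarrow> mu k = lam k" using rows[of k] by auto
      then show ?thesis using mu_r by (auto simp: tplus_def r_def)
    next
      case False
      then show ?thesis using r Xset_zero[OF lam, of k] Xset_zero[OF mu, of k]
        by (auto simp: tplus_def r_def)
    qed
  qed
qed

lemma Xplus_add_box:
  assumes "lam \<in> Xplus n m i j" "1 \<le> i" "i \<le> n"
  shows "tplus n i j lam \<in> Xset n m" and "j = lam (n + 1 - i) + 1"
  using assms diagram_add_box[of lam n m _ i j] unfolding Xplus_def by blast+

lemma Xminus_remove_box:
  assumes "lam \<in> Xminus n m i j" "1 \<le> i" "i \<le> n"
  shows "tminus n i j lam \<in> Xplus n m i j" and "tplus n i j (tminus n i j lam) = lam"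
proof -
  obtain mu where mu: "mu \<in> Xset n m" and lam: "lam \<in> Xset n m"
    and old: "(i, j) \<in> diagram n m lam"
    and remove: "diagram n m mu = diagram n m lam - {(i, j)}"
    using assms(1) unfolding Xminus_def by blast
  have new: "(i, j) \<notin> diagram n m mu" using remove by simp
  have add: "diagram n m lam = diagram n m mu \<union> {(i, j)}" using old remove by auto
  have "lam = tplus n i j mu" using diagram_add_box(1)[OF mu lam assms(2,3) new add] .
  then have "tminus n i j lam = mu" by (simp add: tplus_def tminus_def)
  moreover have "mu \<in> Xplus n m i j" unfolding Xplus_def using mu lam new add by blast
  ultimately show "tminus n i j lam \<in> Xplus n m i j" "tplus n i j (tminus n i j lam) = lam"
    using \<open>lam = tplus n i j mu\<close> by simp_all
qed

lemma conj_part_interval: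
  assumes "\<And>k. 1 \<le> k \<Longrightarrow> k \<le> n \<Longrightarrow> j \<le> lam k \<longleftrightarrow> k < s" "s \<le> n + 1"
  shows "conj_part n lam j = s - 1"
proof -
  have "{k \<in> {1..n}. j \<le> lam k} = {1..s - 1}" using assms by auto
  then show ?thesis unfolding conj_part_def by simp
qed

lemma conj_part_incr:
  assumes "1 \<le> r" "r \<le> n"
  shows "conj_part n (lam(r := lam r + 1)) j = conj_part n lam j + (if j = lam r + 1 then 1 else 0)"
proof (cases "j = lam r + 1")
  case True
  then have "{k \<in> {1..n}. j \<le> (lam(r := lam r + 1)) k} = insert r {k \<in> {1..n}. j \<le> lam k}"
    and "r \<notin> {k \<in> {1..n}. j \<le> lam k}"
    using assms by auto
  then show ?thesis unfolding conj_part_def using True by simp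
next
  case False
  then have "{k \<in> {1..n}. j \<le> (lam(r := lam r + 1)) k} = {k \<in> {1..n}. j \<le> lam k}"
    using assms by auto
  then show ?thesis unfolding conj_part_def using False by simp
qed

lemma conj_part_outer_corner:
  assumes lam: "lam \<in> Xset n m" and lam': "lam(r := lam r + 1) \<in> Xset n m"
    and r: "1 \<le> r" "r \<le> n"
  shows "conj_part n lam (lam r + 1) = r - 1"
proof (rule conj_part_interval)
  fix k assume k: "1 \<le> k" "k \<le> n"
  show "lam r + 1 \<le> lam k \<longleftrightarrow> k < r"
  proof
    assume "lam r + 1 \<le> lam k"
    then show "k < r" using Xset_antimono[OF lam r(1) _ k(2)] by (cases "r \<le> k") auto
  next
    assume "k < r"
    then show "lam r + 1 \<le> lam k" using Xset_antimono[OF lam' k(1) _ r(2)] by simp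
  qed
qed (use r in simp)

lemma xmap_tplus:
  assumes lam: "lam \<in> Xset n m" and lam': "tplus n i j lam \<in> Xset n m"
    and i: "1 \<le> i" "i \<le> n" and j: "j = lam (n + 1 - i) + 1"
  shows "xmap n m lam \<in> Piplus i j"
    and "xmap n m (tplus n i j lam) = tauplus n m i j (xmap n m lam)"
proof -
  define r where "r = n + 1 - i"
  have r: "1 \<le> r" "r \<le> n" "r - 1 = n - i" using i by (auto simp: r_def)
  have row_i: "n + 1 - k = r \<longleftrightarrow> k = i" if "1 \<le> k" "k \<le> n" for k
    using that i by (auto simp: r_def)
  have j_r: "j = lam r + 1" using j by (simp add: r_def)
  have tplus_r: "tplus n i j lam = lam(r := lam r + 1)" by (simp add: tplus_def r_def)
  have "j \<le> m" using Xset_le[OF lam'[unfolded tplus_r] r(1,2)] j_r by simp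
  have "conj_part n lam j = n - i"
    using conj_part_outer_corner[OF lam lam'[unfolded tplus_r] r(1,2)] r(3) by (simp add: j_r)
  then show "xmap n m lam \<in> Piplus i j"
    using i j \<open>j \<le> m\<close> unfolding Piplus_def xmap_def by (simp add: of_nat_diff algebra_simps)
  have "fst (xmap n m (lam(r := lam r + 1))) k = fst (tauplus n m i j (xmap n m lam)) k" for k
    using row_i[of k] j_r i unfolding xmap_def tauplus_def by (auto simp: algebra_simps)
  moreover have "snd (xmap n m (lam(r := lam r + 1))) k = snd (tauplus n m i j (xmap n m lam)) k" for k
    using conj_part_incr[OF r(1,2), of lam k] \<open>j \<le> m\<close>
    unfolding xmap_def tauplus_def j_r by (auto simp: algebra_simps)
  ultimately show "xmap n m (tplus n i j lam) = tauplus n m i j (xmap n m lam)"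
    unfolding tplus_r by (simp add: prod_eq_iff fun_eq_iff)
qed

lemma xmap_Xplus:
  assumes "lam \<in> Xplus n m i j" "1 \<le> i" "i \<le> n"
  shows "xmap n m lam \<in> Piplus i j"
    and "xmap n m (tplus n i j lam) = tauplus n m i j (xmap n m lam)"
proof -
  have "lam \<in> Xset n m" using assms(1) by (simp add: Xplus_def)
  then show "xmap n m lam \<in> Piplus i j"
    and "xmap n m (tplus n i j lam) = tauplus n m i j (xmap n m lam)"
    using xmap_tplus Xplus_add_box[OF assms] assms(2,3) by blast+
qed

lemma tauplus_Piplus: "L \<in> Piplus i j \<Longrightarrow> tauplus n m i j L \<in> Piminus n m i j"
  unfolding Piplus_def Piminus_def tauplus_def by simp

lemma tauminus_tauplus: "tauminus n m i j (tauplus n m i j L) = L"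
  unfolding tauplus_def tauminus_def by simp

theorem lemma4p3:
  fixes n m i j :: nat and lam :: "nat \<Rightarrow> nat"
  assumes "0 < n" and "n < m"
    and "lam \<in> Xset n m"
    and "1 \<le> i" and "i \<le> n" and "1 \<le> j" and "j \<le> m"
  shows "(lam \<in> Xplus n m i j \<longrightarrow> xmap n m lam \<in> Piplus i j)
       \<and> (lam \<in> Xminus n m i j \<longrightarrow> xmap n m lam \<in> Piminus n m i j)
       \<and> (lam \<in> Xplus n m i j \<longrightarrow> xmap n m (tplus n i j lam) = tauplus n m i j (xmap n m lam))
       \<and> (lam \<in> Xminus n m i j \<longrightarrow> xmap n m (tminus n i j lam) = tauminus n m i j (xmap n m lam))"
proof (intro conjI impI)
  assume "lam \<in> Xplus n m i j"
  then show "xmap n m lam \<in> Piplus i j"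
    and "xmap n m (tplus n i j lam) = tauplus n m i j (xmap n m lam)"
    using xmap_Xplus \<open>1 \<le> i\<close> \<open>i \<le> n\<close> by blast+
next
  assume "lam \<in> Xminus n m i j"
  define mu where "mu = tminus n i j lam"
  have mu: "mu \<in> Xplus n m i j" and "tplus n i j mu = lam"
    using Xminus_remove_box \<open>lam \<in> Xminus n m i j\<close> \<open>1 \<le> i\<close> \<open>i \<le> n\<close>
    unfolding mu_def by blast+
  then have lam: "xmap n m lam = tauplus n m i j (xmap n m mu)"
    using xmap_Xplus(2) \<open>1 \<le> i\<close> \<open>i \<le> n\<close> by metis
  show "xmap n m lam \<in> Piminus n m i j"
    unfolding lam using tauplus_Piplus xmap_Xplus(1) mu \<open>1 \<le> i\<close> \<open>i \<le> n\<close> by blast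
  show "xmap n m (tminus n i j lam) = tauminus n m i j (xmap n m lam)"
    unfolding lam tauminus_tauplus mu_def[symmetric] ..
qed

end
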